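(* Suppose $\rho\in\mathcal{P}$. Then there is a positive constant $C_9$ such that $|V_c(x,y)|\le C_9$ for all $(x,y)$ with $x<-3a$ and for all $0<\delta\le\delta_\mu$.
   Context: Fix $a>0$. For $0<\delta<1$ and constants $\beta>0$, $\lambda\in\mathbb{R}$ ($\lambda$ feasible: $\lambda>0$ if $0<\beta<1$, $\lambda\ge-1$ if $\beta=1$, $\lambda\ne0$ if $\beta>1$), put $\mu=\delta+\lambda\delta^{\beta}$, and let $\delta_\mu\in(0,1)$ be a number with $\mu\ge0$ for $0<\delta\le\delta_\mu$. The dielectric constant is $\varepsilon_c=1+\mathrm{i}\mu$ for $x<0$, $\varepsilon_s=-1+\mathrm{i}\delta$ for $0\le x\le a$, $\varepsilon_m=1$ for $x>a$. Let $\mathcal{M}=\{(x,y)\in\mathbb{R}^2:x>a\}$. $\mathcal{P}$ is the set of real-valued $\rho\in L^2(\mathcal{M})\cap L^\infty(\mathcal{M})$ with compact support in $\mathcal{M}$, $0<|\operatorname{supp}\rho|<\infty$ and $\int\!\!\int\rho=0$; $\rho$ is extended by $0$. $d_0,d_1$ are the minimal and maximal $x$-coordinates of $\operatorname{supp}\rho$. Fourier transform in $y$: $\widehat f(x,k)=\int f(x,y)\mathrm{e}^{-\mathrm{i}ky}\mathrm{d}y$; $I_k=\int_{d_0}^{d_1}\widehat\rho(s,k)\mathrm{e}^{-|k|s}\mathrm{d}s$. Let $\chi_c=\varepsilon_s/\varepsilon_c$, $\psi_k^+=\frac{1}{2\chi_c}[(\chi_c+1)\mathrm{e}^{|k|a}+(\chi_c-1)\mathrm{e}^{-|k|a}]$,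 $\psi_k^-=\frac{|k|\varepsilon_s}{2\chi_c}[(\chi_c+1)\mathrm{e}^{|k|a}-(\chi_c-1)\mathrm{e}^{-|k|a}]$, $A_k=I_k/(\mathrm{e}^{-|k|a}(|k|\psi_k^++\psi_k^-))$. The potential $V$ is defined by its $y$-Fourier transform: for $k\ne0$, $\widehat V(x,k)=A_k\mathrm{e}^{|k|x}$ for $x<0$; $\widehat V(x,k)=\frac{A_k}{2\chi_c}[(\chi_c+1)\mathrm{e}^{|k|x}+(\chi_c-1)\mathrm{e}^{-|k|x}]$ for $0\le x\le a$; $\widehat V(x,k)=A_k\psi_k^+\cosh(|k|(x-a))+\frac{A_k\psi_k^-}{|k|}\sinh(|k|(x-a))+\frac1{|k|}\int_a^x\sinh(|k|(x'-x))\widehat\rho(x',k)\mathrm{d}x'$ for $x>a$. It solves $-\nabla\cdot(\varepsilon\nabla V)=\rho$ in $\mathbb{R}^2$ with $V$, $\varepsilon\partial_xV$ continuous across $x=0,a$ and $\partial_xV\to0$ as $|x|\to\infty$. $V_c=V$ restricted to $\{x<0\}$, where $V$ is harmonic; pointwise values refer to its smooth representative. *)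

theory Defs
  imports "HOL-Analysis.Analysis"
begin

text \<open>Layered structure: cladding x<0, slab 0<=x<=a, medium x>a.
  Parameters: a (slab width), beta, lam (lambda), delta.\<close>

definition mu :: "real \<Rightarrow> real \<Rightarrow> real \<Rightarrow> real" where
  "mu beta lam delta = delta + lam * delta powr beta"

definition eps_c :: "real \<Rightarrow> real \<Rightarrow> real \<Rightarrow> complex" where
  "eps_c beta lam delta = 1 + \<i> * complex_of_real (mu beta lam delta)"

definition eps_s :: "real \<Rightarrow> complex" where
  "eps_s delta = -1 + \<i> * complex_of_real delta"

definition chi_c :: "real \<Rightarrow> real \<Rightarrow> real \<Rightarrow> complex" where
  "chi_c beta lam delta = eps_s delta / eps_c beta lam delta"

definition feasible :: "real \<Rightarrow> real \<Rightarrow> bool" where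
  "feasible beta lam \<longleftrightarrow> beta > 0 \<and>
     ((beta < 1 \<longrightarrow> lam > 0) \<and> (beta = 1 \<longrightarrow> lam \<ge> -1) \<and> (beta > 1 \<longrightarrow> lam \<noteq> 0))"

definition supp_rho :: "(real \<times> real \<Rightarrow> real) \<Rightarrow> (real \<times> real) set" where
  "supp_rho rho = closure {p. rho p \<noteq> 0}"

definition admissible :: "real \<Rightarrow> (real \<times> real \<Rightarrow> real) \<Rightarrow> bool" where
  "admissible a rho \<longleftrightarrow>
     rho \<in> borel_measurable lborel \<and>
     integrable lborel (\<lambda>p. (rho p)\<^sup>2) \<and>
     (\<exists>B. AE p in lborel. \<bar>rho p\<bar> \<le> B) \<and>
     compact (supp_rho rho) \<and> supp_rho rho \<subseteq> {p. fst p > a} \<and>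
     0 < emeasure lborel (supp_rho rho) \<and> emeasure lborel (supp_rho rho) < \<infinity> \<and>
     (LINT p|lborel. rho p) = 0"

definition d0 :: "(real \<times> real \<Rightarrow> real) \<Rightarrow> real" where
  "d0 rho = Inf (fst ` supp_rho rho)"

definition d1 :: "(real \<times> real \<Rightarrow> real) \<Rightarrow> real" where
  "d1 rho = Sup (fst ` supp_rho rho)"

definition rho_hat :: "(real \<times> real \<Rightarrow> real) \<Rightarrow> real \<Rightarrow> real \<Rightarrow> complex" where
  "rho_hat rho x k = (LINT y|lborel. complex_of_real (rho (x, y)) * cis (- (k * y)))"

definition I_k :: "(real \<times> real \<Rightarrow> real) \<Rightarrow> real \<Rightarrow> complex" where
  "I_k rho k = (LINT s:{d0 rho..d1 rho}|lborel. rho_hat rho s k * exp (- \<bar>k\<bar> * s))"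

definition psi_plus :: "real \<Rightarrow> real \<Rightarrow> real \<Rightarrow> real \<Rightarrow> real \<Rightarrow> complex" where
  "psi_plus a beta lam delta k =
     (let chi = chi_c beta lam delta in
      1 / (2 * chi) * ((chi + 1) * exp (\<bar>k\<bar> * a) + (chi - 1) * exp (- \<bar>k\<bar> * a)))"

definition psi_minus :: "real \<Rightarrow> real \<Rightarrow> real \<Rightarrow> real \<Rightarrow> real \<Rightarrow> complex" where
  "psi_minus a beta lam delta k =
     (let chi = chi_c beta lam delta in
      complex_of_real \<bar>k\<bar> * eps_s delta / (2 * chi) *
        ((chi + 1) * exp (\<bar>k\<bar> * a) - (chi - 1) * exp (- \<bar>k\<bar> * a)))"

definition A_k :: "real \<Rightarrow> real \<Rightarrow> real \<Rightarrow> real \<Rightarrow> (real \<times> real \<Rightarrow> real) \<Rightarrow> real \<Rightarrow> complex" where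
  "A_k a beta lam delta rho k =
     I_k rho k / (exp (- \<bar>k\<bar> * a) *
       (complex_of_real \<bar>k\<bar> * psi_plus a beta lam delta k + psi_minus a beta lam delta k))"

text \<open>V_c(x,y) for x<0: inverse y-Fourier transform of A_k e^{|k|x}
  (absolutely convergent; this is the smooth representative).\<close>
definition V_c :: "real \<Rightarrow> real \<Rightarrow> real \<Rightarrow> real \<Rightarrow> (real \<times> real \<Rightarrow> real) \<Rightarrow> real \<Rightarrow> real \<Rightarrow> complex" where
  "V_c a beta lam delta rho x y =
     (1 / (2 * pi)) * (LINT k|lborel. A_k a beta lam delta rho k * exp (\<bar>k\<bar> * x) * cis (k * y))"

end

theory Submission
  imports Defs "HOL-Probability.Sinc_Integral"
begin

text \<open>Since \<open>\<rho>\<close> has mean zero, \<open>I_k\<close> is the integral of \<open>\<rho>\<close> against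
  \<open>exp(-iky - |k|s) - 1\<close>, which is \<open>O(|k|)\<close> on the compact support; hence \<open>|I_k| \<le> C |k|\<close>.
  The denominator of \<open>A_k\<close> is \<open>|k|/(2 \<epsilon>_s)\<close> times a bracket whose real part is at most
  \<open>-3 exp(-2|k|a)\<close> for every \<open>\<delta>\<close>, because \<open>\<mu> \<ge> 0\<close> and \<open>\<delta> < 1\<close>. So for \<open>x \<le> -3a\<close> the
  Fourier integrand of \<open>V_c\<close> is dominated by \<open>4/3 C exp(-|k|a)\<close>, an integrable bound that
  does not depend on \<open>\<delta>\<close>, \<open>x\<close> or \<open>y\<close>. Feasibility of \<open>(\<beta>, \<lambda>)\<close> enters only through \<open>\<mu> \<ge> 0\<close>.\<close>

lemma norm_cis_minus_1_le: "cmod (cis t - 1) \<le> \<bar>t\<bar>"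
proof -
  have "(cmod (cis t - 1))\<^sup>2 = (cos t - 1)\<^sup>2 + (sin t)\<^sup>2"
    by (simp add: cmod_power2)
  also have "\<dots> = 4 * (sin (t/2))\<^sup>2"
    using sin_cos_squared_add[of t] cos_double_sin[of "t/2"] by (simp add: power2_eq_square algebra_simps)
  also have "\<dots> \<le> 4 * (t/2)\<^sup>2"
    using power_mono[OF abs_sin_x_le_abs_x[of "t/2"] abs_ge_zero, of 2] by (simp only: power2_abs)
  finally have "(cmod (cis t - 1))\<^sup>2 \<le> \<bar>t\<bar>\<^sup>2"
    by (simp add: power2_eq_square)
  thus ?thesis by (rule power2_le_imp_le) simp
qed

lemma norm_integral_le_integral_of_dominated:
  fixes f :: "'a \<Rightarrow> 'b::{banach,second_countable_topology}"
  assumes "integrable M h" and "\<And>x. norm (f x) \<le> h x"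
  shows "norm (integral\<^sup>L M f) \<le> integral\<^sup>L M h"
proof (cases "integrable M (\<lambda>x. norm (f x))")
  case True
  have "norm (integral\<^sup>L M f) \<le> (\<integral>x. norm (f x) \<partial>M)" by (rule integral_norm_bound)
  also have "\<dots> \<le> integral\<^sup>L M h" using True assms by (intro integral_mono) auto
  finally show ?thesis .
next
  case False
  have "norm (integral\<^sup>L M f) \<le> (\<integral>x. norm (f x) \<partial>M)" by (rule integral_norm_bound)
  also have "\<dots> = 0" using False by (rule not_integrable_integral_eq)
  also have "\<dots> \<le> integral\<^sup>L M h" using assms(2)[THEN order_trans[OF norm_ge_zero]]
    by (simp add: integral_nonneg)
  finally show ?thesis .
qed

lemma integrable_exp_neg_abs_mult:
  assumes "0 < a"
  shows "integrable lborel (\<lambda>k::real. exp (- \<bar>k\<bar> * a))"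
proof -
  define f where "f x = indicator {0<..} x *\<^sub>R exp (- (x * a))" for x :: real
  have "integrable lborel f"
    using integrable_I0i_exp_mscale[OF assms] unfolding set_integrable_def f_def .
  hence int: "integrable lborel (\<lambda>x. f x + f (0 + (-1) * x))"
    by (intro Bochner_Integration.integrable_add lborel_integrable_real_affine) auto
  have "AE x in lborel. norm (exp (- \<bar>x\<bar> * a)) \<le> norm (f x + f (0 + (-1) * x))"
    using AE_lborel_singleton[of 0] by eventually_elim (auto simp: f_def indicator_def)
  thus ?thesis
    by (rule Bochner_Integration.integrable_bound[OF int, rotated]) measurable
qed

definition I_k_kernel :: "real \<Rightarrow> real \<times> real \<Rightarrow> complex" where
  "I_k_kernel k p = cis (- (k * snd p)) * exp (- \<bar>k\<bar> * fst p)"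

lemma I_k_kernel_measurable[measurable]: "I_k_kernel k \<in> borel_measurable borel"
  unfolding I_k_kernel_def by (intro borel_measurable_continuous_onI continuous_intros)

lemma norm_I_k_kernel_le_1: "0 \<le> fst p \<Longrightarrow> cmod (I_k_kernel k p) \<le> 1"
  by (simp add: I_k_kernel_def norm_mult flip: exp_of_real)

lemma norm_I_k_kernel_minus_1_le:
  assumes "0 \<le> fst p"
  shows "cmod (I_k_kernel k p - 1) \<le> \<bar>k\<bar> * (\<bar>fst p\<bar> + \<bar>snd p\<bar>)"
proof -
  define e where "e = exp (- \<bar>k\<bar> * fst p)"
  define c where "c = cis (- (k * snd p))"
  have e: "0 < e" "e \<le> 1" "1 - e \<le> \<bar>k\<bar> * fst p"
    using assms exp_ge_add_one_self[of "- \<bar>k\<bar> * fst p"] by (auto simp: e_def)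
  have norm_e: "cmod (of_real (e - 1)) = 1 - e" using e by (simp only: norm_of_real)
  have "I_k_kernel k p - 1 = c * of_real (e - 1) + (c - 1)"
    by (simp add: I_k_kernel_def c_def e_def algebra_simps flip: exp_of_real)
  also have "cmod \<dots> \<le> (1 - e) + \<bar>k * snd p\<bar>"
    using norm_triangle_ineq[of "c * of_real (e - 1)" "c - 1"] norm_cis_minus_1_le[of "- (k * snd p)"] norm_e
    by (simp add: c_def norm_mult)
  also have "\<dots> \<le> \<bar>k\<bar> * (\<bar>fst p\<bar> + \<bar>snd p\<bar>)"
    using e assms by (simp add: abs_mult algebra_simps)
  finally show ?thesis .
qed

lemma supp_rho_zero: "p \<notin> supp_rho rho \<Longrightarrow> rho p = 0"
  using closure_subset[of "{p. rho p \<noteq> 0}"] unfolding supp_rho_def by auto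

lemma fst_supp_rho_subset:
  assumes "compact (supp_rho rho)"
  shows "fst ` supp_rho rho \<subseteq> {d0 rho..d1 rho}"
proof -
  have "bounded (fst ` supp_rho rho)"
    using assms by (intro compact_imp_bounded compact_continuous_image continuous_intros)
  thus ?thesis unfolding d0_def d1_def
    by (auto intro!: cInf_lower cSup_upper bounded_imp_bdd_below bounded_imp_bdd_above simp: image_iff)
      (metis fst_conv)+
qed

lemma admissible_integrable:
  assumes "admissible a rho"
  shows "integrable lborel rho"
proof -
  define S where "S = supp_rho rho"
  obtain B where B: "AE p in lborel. \<bar>rho p\<bar> \<le> B" and [measurable]: "rho \<in> borel_measurable lborel"
    and "compact S" "emeasure lborel S < \<infinity>"
    using assms unfolding admissible_def S_def by blast
  hence int: "integrable lborel (\<lambda>p. max B 0 * indicator S p :: real)"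
    by (intro integrable_mult_right) (simp add: integrable_indicator_iff compact_imp_closed)
  have "AE p in lborel. norm (rho p) \<le> norm (max B 0 * indicator S p :: real)"
    using B by eventually_elim (auto simp: S_def supp_rho_zero indicator_def)
  thus ?thesis by (rule Bochner_Integration.integrable_bound[OF int, rotated]) simp
qed

lemma integrable_rho_I_k_kernel:
  assumes "0 \<le> a" and "admissible a rho"
  shows "integrable lborel (\<lambda>p. rho p * I_k_kernel k p)"
proof (rule Bochner_Integration.integrable_bound)
  have [measurable]: "rho \<in> borel_measurable lborel" using assms(2) unfolding admissible_def by blast
  show "(\<lambda>p. rho p * I_k_kernel k p) \<in> borel_measurable lborel" by measurable
  have "cmod (rho p * I_k_kernel k p) \<le> norm (rho p)" for p
  proof (cases "p \<in> supp_rho rho")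
    case True
    hence "0 \<le> fst p" using assms unfolding admissible_def by force
    thus ?thesis using norm_I_k_kernel_le_1 by (simp add: norm_mult mult_left_le)
  qed (simp add: supp_rho_zero)
  thus "AE p in lborel. cmod (rho p * I_k_kernel k p) \<le> norm (rho p)" by simp
qed (rule admissible_integrable[OF assms(2)])

lemma I_k_eq_integral:
  assumes "0 \<le> a" and "admissible a rho"
  shows "I_k rho k = (LINT p|lborel. rho p * I_k_kernel k p)"
proof -
  have fst_supp: "fst ` supp_rho rho \<subseteq> {d0 rho..d1 rho}"
    using assms(2) fst_supp_rho_subset unfolding admissible_def by blast
  have inner: "(LINT y|lborel. rho (s, y) * I_k_kernel k (s, y)) = rho_hat rho s k * exp (- \<bar>k\<bar> * s)" for s
    unfolding I_k_kernel_def rho_hat_def by (simp add: mult.assoc[symmetric] integral_mult_left_zero)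
  have outside: "rho_hat rho s k = 0" if "s \<notin> {d0 rho..d1 rho}" for s
  proof -
    have "rho (s, y) = 0" for y using fst_supp that supp_rho_zero by force
    thus ?thesis unfolding rho_hat_def by simp
  qed
  have "(LINT p|lborel. rho p * I_k_kernel k p) = (LINT s|lborel. LINT y|lborel. rho (s, y) * I_k_kernel k (s, y))"
    using lborel_pair.integral_fst'[OF integrable_rho_I_k_kernel[OF assms, unfolded lborel_prod[symmetric]]]
    by (simp add: lborel_prod)
  also have "\<dots> = I_k rho k"
    unfolding inner I_k_def set_lebesgue_integral_def
    by (rule Bochner_Integration.integral_cong) (auto simp: indicator_def outside)
  finally show ?thesis ..
qed

lemma norm_I_k_le:
  assumes "0 \<le> a" and "admissible a rho"
  shows "\<exists>C \<ge> 0. \<forall>k. cmod (I_k rho k) \<le> C * \<bar>k\<bar>"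
proof -
  define S where "S = supp_rho rho"
  have "compact S" and supp_pos: "\<And>p. p \<in> S \<Longrightarrow> 0 \<le> fst p"
    and mean_zero: "(LINT p|lborel. rho p) = 0"
    using assms unfolding admissible_def S_def by force+
  then obtain R where R: "\<And>p. p \<in> S \<Longrightarrow> norm p \<le> R" and "0 \<le> R"
    using compact_imp_bounded bounded_pos by (metis less_eq_real_def)
  have R2: "\<bar>fst p\<bar> + \<bar>snd p\<bar> \<le> 2 * R" if "p \<in> S" for p
    using R[OF that] norm_fst_le[of "fst p" "snd p"] norm_snd_le[of "snd p" "fst p"] by simp
  have rho_int: "integrable lborel rho" by (rule admissible_integrable[OF assms(2)])
  define C where "C = (LINT p|lborel. \<bar>rho p\<bar>) * (2 * R)"
  have "cmod (I_k rho k) \<le> C * \<bar>k\<bar>" for k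
  proof -
    have bound: "cmod (rho p * I_k_kernel k p - rho p) \<le> \<bar>rho p\<bar> * (\<bar>k\<bar> * (2 * R))" for p
    proof (cases "p \<in> S")
      case True
      have "cmod (rho p * I_k_kernel k p - rho p) = \<bar>rho p\<bar> * cmod (I_k_kernel k p - 1)"
        by (metis mult.right_neutral norm_mult norm_of_real right_diff_distrib)
      also have "\<dots> \<le> \<bar>rho p\<bar> * (\<bar>k\<bar> * (2 * R))"
        using norm_I_k_kernel_minus_1_le[OF supp_pos[OF True], of k] R2[OF True]
        by (intro mult_left_mono) (meson abs_ge_zero mult_left_mono order_trans)+
      finally show ?thesis .
    qed (simp add: S_def supp_rho_zero)
    have "I_k rho k = (LINT p|lborel. rho p * I_k_kernel k p - rho p)"
      using mean_zero rho_int
      by (simp add: I_k_eq_integral[OF assms] integrable_rho_I_k_kernel[OF assms])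
    also have "cmod \<dots> \<le> (LINT p|lborel. \<bar>rho p\<bar> * (\<bar>k\<bar> * (2 * R)))"
      using rho_int bound by (intro norm_integral_le_integral_of_dominated) auto
    also have "\<dots> = C * \<bar>k\<bar>" by (simp add: C_def)
    finally show ?thesis .
  qed
  moreover have "0 \<le> C" using \<open>0 \<le> R\<close> by (simp add: C_def)
  ultimately show ?thesis by blast
qed

lemma abs_complex_of_real: "\<bar>complex_of_real t\<bar> = complex_of_real \<bar>t\<bar>"
  by (simp add: abs_complex_def)

lemma eps_s_nonzero: "eps_s delta \<noteq> 0"
  by (simp add: eps_s_def complex_eq_iff)

lemma eps_c_nonzero: "eps_c beta lam delta \<noteq> 0"
  by (simp add: eps_c_def complex_eq_iff)

definition A_k_denominator :: "real \<Rightarrow> real \<Rightarrow> real \<Rightarrow> real \<Rightarrow> real \<Rightarrow> complex" where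
  "A_k_denominator a beta lam delta k =
     exp (- \<bar>k\<bar> * a) * (complex_of_real \<bar>k\<bar> * psi_plus a beta lam delta k + psi_minus a beta lam delta k)"

lemma A_k_eq: "A_k a beta lam delta rho k = I_k rho k / A_k_denominator a beta lam delta k"
  by (simp add: A_k_def A_k_denominator_def)

lemma A_k_denominator_eq:
  "A_k_denominator a beta lam delta k =
     complex_of_real \<bar>k\<bar> / (2 * eps_s delta) *
       ((eps_s delta + eps_c beta lam delta) * (1 + eps_s delta) +
        (eps_s delta - eps_c beta lam delta) * (1 - eps_s delta) * complex_of_real (exp (- 2 * \<bar>k\<bar> * a)))"
proof -
  define E where "E = exp (\<bar>k\<bar> * a)"
  define es where "es = eps_s delta"
  define ec where "ec = eps_c beta lam delta"
  have nonzero: "E \<noteq> 0" "es \<noteq> 0" "ec \<noteq> 0"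
    by (simp_all add: E_def es_def ec_def eps_s_nonzero eps_c_nonzero)
  have exps: "exp (\<bar>complex_of_real k\<bar> * complex_of_real a) = complex_of_real E"
    "exp (- \<bar>complex_of_real k\<bar> * complex_of_real a) = complex_of_real (1 / E)"
    "complex_of_real (exp (- \<bar>k\<bar> * a)) = complex_of_real (1 / E)"
    by (simp_all add: E_def abs_complex_of_real exp_minus divide_inverse flip: exp_of_real)
  have exp2: "exp (- 2 * \<bar>k\<bar> * a) = 1 / E\<^sup>2"
    by (simp add: E_def power2_eq_square field_simps flip: exp_add)
  show ?thesis
    using nonzero
    unfolding A_k_denominator_def psi_plus_def psi_minus_def chi_c_def Let_def
      es_def[symmetric] ec_def[symmetric] E_def[symmetric] exps exp2
    by (simp add: field_simps power2_eq_square)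
qed

lemma norm_A_k_denominator_ge:
  assumes "0 < delta" "delta < 1" "0 \<le> mu beta lam delta"
  shows "3/4 * \<bar>k\<bar> * exp (- 2 * \<bar>k\<bar> * a) \<le> cmod (A_k_denominator a beta lam delta k)"
proof -
  define m where "m = mu beta lam delta"
  define q where "q = exp (- 2 * \<bar>k\<bar> * a)"
  define B where "B = (eps_s delta + eps_c beta lam delta) * (1 + eps_s delta) +
        (eps_s delta - eps_c beta lam delta) * (1 - eps_s delta) * complex_of_real q"
  have q: "0 < q" by (simp add: q_def)
  have "delta\<^sup>2 - delta * m - 4 \<le> -3"
    using assms by (simp add: m_def power2_eq_square) (smt (verit) mult_left_le mult_nonneg_nonneg)
  hence "(delta\<^sup>2 - delta * m - 4) * q \<le> -3 * q" using q by (intro mult_right_mono) auto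
  moreover have "0 \<le> delta * (delta + m)" using assms by (simp add: m_def)
  moreover have "Re B = - (delta * (delta + m)) + (delta\<^sup>2 - delta * m - 4) * q"
    by (simp add: B_def eps_s_def eps_c_def m_def power2_eq_square algebra_simps)
  ultimately have "Re B \<le> -3 * q" by linarith
  hence B: "3 * q \<le> cmod B" using abs_Re_le_cmod[of B] by linarith
  have "cmod (eps_s delta) \<le> 2" using cmod_le[of "eps_s delta"] assms by (simp add: eps_s_def)
  hence "\<bar>k\<bar> / 4 \<le> \<bar>k\<bar> / (2 * cmod (eps_s delta))"
    using eps_s_nonzero[of delta] by (intro divide_left_mono) auto
  hence "\<bar>k\<bar> / 4 * (3 * q) \<le> \<bar>k\<bar> / (2 * cmod (eps_s delta)) * cmod B"
    using B q by (intro mult_mono) auto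
  hence "3/4 * \<bar>k\<bar> * q \<le> \<bar>k\<bar> / (2 * cmod (eps_s delta)) * cmod B"
    by (simp add: mult.commute mult.left_commute)
  also have "\<dots> = cmod (A_k_denominator a beta lam delta k)"
    unfolding A_k_denominator_eq B_def q_def by (simp add: norm_mult norm_divide)
  finally show ?thesis unfolding q_def .
qed

lemma norm_A_k_mult_exp_le:
  assumes "0 < delta" "delta < 1" "0 \<le> mu beta lam delta" and "k \<noteq> 0" and "x \<le> -3 * a"
  shows "cmod (A_k a beta lam delta rho k * exp (\<bar>complex_of_real k\<bar> * complex_of_real x))
    \<le> 4/3 * cmod (I_k rho k) / \<bar>k\<bar> * exp (- \<bar>k\<bar> * a)"
proof -
  define D where "D = 3/4 * \<bar>k\<bar> * exp (- 2 * \<bar>k\<bar> * a)"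
  have "0 < D" using assms(4) by (simp add: D_def)
  moreover have "D \<le> cmod (A_k_denominator a beta lam delta k)"
    using norm_A_k_denominator_ge[OF assms(1-3)] by (simp add: D_def)
  ultimately have "cmod (A_k a beta lam delta rho k) \<le> cmod (I_k rho k) / D"
    unfolding A_k_eq norm_divide by (intro divide_left_mono mult_pos_pos) auto
  moreover have "cmod (exp (\<bar>complex_of_real k\<bar> * complex_of_real x)) = exp (\<bar>k\<bar> * x)"
    by (simp add: abs_complex_of_real flip: of_real_mult exp_of_real)
  moreover have "exp (\<bar>k\<bar> * x) \<le> exp (- 3 * \<bar>k\<bar> * a)"
    using mult_left_mono[OF assms(5), of "\<bar>k\<bar>"] by simp
  ultimately have "cmod (A_k a beta lam delta rho k * exp (\<bar>complex_of_real k\<bar> * complex_of_real x)) \<le> cmod (I_k rho k) / D * exp (- 3 * \<bar>k\<bar> * a)"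
    unfolding norm_mult using \<open>0 < D\<close> by (intro mult_mono) auto
  also have "\<dots> = 4/3 * cmod (I_k rho k) / \<bar>k\<bar> * exp (- \<bar>k\<bar> * a)"
    using assms(4) by (simp add: D_def field_simps flip: exp_add)
  finally show ?thesis .
qed

lemma norm_V_c_integrand_le:
  assumes "0 < delta" "delta < 1" "0 \<le> mu beta lam delta" and "x \<le> -3 * a"
    and "0 \<le> C" "cmod (I_k rho k) \<le> C * \<bar>k\<bar>"
  shows "cmod (A_k a beta lam delta rho k * exp (\<bar>complex_of_real k\<bar> * complex_of_real x) * cis (k * y))
    \<le> 4/3 * C * exp (- \<bar>k\<bar> * a)"
proof (cases "k = 0")
  case True
  thus ?thesis using assms(5,6) by (simp add: A_k_def)
next
  case False
  have "cmod (A_k a beta lam delta rho k * exp (\<bar>complex_of_real k\<bar> * complex_of_real x) * cis (k * y)) \<le>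
      4/3 * (cmod (I_k rho k) / \<bar>k\<bar>) * exp (- \<bar>k\<bar> * a)"
    using norm_A_k_mult_exp_le[OF assms(1-3) False assms(4)] by (simp add: norm_mult)
  also have "\<dots> \<le> 4/3 * C * exp (- \<bar>k\<bar> * a)"
    using assms(6) False by (intro mult_right_mono mult_left_mono) (auto simp: divide_le_eq)
  finally show ?thesis .
qed

lemma norm_V_c_le:
  assumes "integrable lborel h"
    and "\<And>k. cmod (A_k a beta lam delta rho k * exp (\<bar>complex_of_real k\<bar> * complex_of_real x) * cis (k * y)) \<le> h k"
  shows "cmod (V_c a beta lam delta rho x y) \<le> integral\<^sup>L lborel h / (2 * pi)"
proof -
  have "cmod (V_c a beta lam delta rho x y) =
      cmod (CLBINT k. A_k a beta lam delta rho k * exp (\<bar>complex_of_real k\<bar> * complex_of_real x) * cis (k * y)) / (2 * pi)"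
    unfolding V_c_def norm_mult norm_of_real by simp
  also have "\<dots> \<le> integral\<^sup>L lborel h / (2 * pi)"
    using assms by (intro divide_right_mono norm_integral_le_integral_of_dominated) auto
  finally show ?thesis .
qed

theorem lemma6p3:
  fixes a beta lam delta_mu :: real and rho :: "real \<times> real \<Rightarrow> real"
  assumes "a > 0"
    and "feasible beta lam"
    and "0 < delta_mu" and "delta_mu < 1"
    and "\<forall>delta. 0 < delta \<and> delta \<le> delta_mu \<longrightarrow> mu beta lam delta \<ge> 0"
    and "admissible a rho"
  shows "\<exists>C9 > 0. \<forall>delta x y. 0 < delta \<and> delta \<le> delta_mu \<and> x < -3 * a \<longrightarrow>
           cmod (V_c a beta lam delta rho x y) \<le> C9"
proof -
  obtain C where "0 \<le> C" and I_k_le: "\<And>k. cmod (I_k rho k) \<le> C * \<bar>k\<bar>"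
    using norm_I_k_le[of a rho] assms(1,6) by auto
  define h where "h k = 4/3 * C * exp (- \<bar>k\<bar> * a)" for k
  have "integrable lborel h"
    unfolding h_def using integrable_exp_neg_abs_mult[OF assms(1)] by (rule integrable_mult_right)
  have "cmod (V_c a beta lam delta rho x y) \<le> integral\<^sup>L lborel h / (2 * pi)"
    if "0 < delta" "delta \<le> delta_mu" "x < -3 * a" for delta x y
  proof (rule norm_V_c_le[OF \<open>integrable lborel h\<close>])
    have "0 \<le> mu beta lam delta" using assms(5) that by blast
    thus "cmod (A_k a beta lam delta rho k * exp (\<bar>complex_of_real k\<bar> * complex_of_real x) * cis (k * y)) \<le> h k" for k
      unfolding h_def using norm_V_c_integrand_le[OF \<open>0 < delta\<close> _ _ _ \<open>0 \<le> C\<close> I_k_le] that assms(4) by simp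
  qed
  thus ?thesis
    by (intro exI[of _ "max 1 (integral\<^sup>L lborel h / (2 * pi))"]) (auto intro: max.coboundedI2)
qed

end
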